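(* For each $n\in\mathbf{N}$ let $W_n = (w_{ij}^{(n)})_{i,j=1}^n$ be a random $n\times n$ Hermitian matrix whose upper triangular entries are jointly independent with mean zero, and assume: there are $\eta_n>0$ with $\eta_n\to0$ and $|w_{ij}^{(n)}|\le\eta_n$ for all $n,i,j$; there is a finite $C\ge0$ with $\sum_{j=1}^n \operatorname{Var}[w_{ij}^{(n)}]\le C$ for all $n$ and $i$; and \[ \lim_{n\to\infty} \frac{1}{n}\sum_{i=1}^n \biggl| \sum_{j=1}^n \Bigl( \operatorname{Var}\bigl[w_{ij}^{(n)}\bigr] - \frac{1}{n} \Bigr) \biggr| = 0. \] Then for any finite tree $T$, \[ \lim_{n\to\infty} \frac{1}{n} \sum_{F \in I(T,n)} P(T,F) = 1. \]
   Context: Graphs are undirected, may have loops, and have no multiple edges. For a finite graph $G$ and $n\in\mathbf{N}$, $I(G,n)$ is the set of injections $V(G)\to\{1,\ldots,n\}$. For $F\in I(G,n)$, $P(G,F) := \prod_{e\in E(G)} \operatorname{Var}\bigl[w^{(n)}_{F(u_e)F(v_e)}\bigr]$, where $u_e,v_e$ are the ends of $e$; the empty product is $1$. $\operatorname{Var}[w]=\mathbf{E}|w-\mathbf{E}w|^2$. *)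

theory Defs
  imports "HOL-Probability.Probability"
begin

text \<open>A graph is a pair (V, E) with V a finite vertex set and E a set of edges,
  each edge being a set {u, v} of its ends (a loop is {u, u} = {u}).\<close>

definition graph :: "'v set \<Rightarrow> 'v set set \<Rightarrow> bool" where
  "graph V E \<longleftrightarrow> finite V \<and> (\<forall>e\<in>E. \<exists>u\<in>V. \<exists>v\<in>V. e = {u, v})"

definition graph_connected :: "'v set \<Rightarrow> 'v set set \<Rightarrow> bool" where
  "graph_connected V E \<longleftrightarrow>
     (\<forall>u\<in>V. \<forall>v\<in>V. (u, v) \<in> {(x, y). {x, y} \<in> E}\<^sup>*)"

definition has_loop :: "'v set set \<Rightarrow> bool" where
  "has_loop E \<longleftrightarrow> (\<exists>u. {u} \<in> E)"

definition is_cycle :: "'v set \<Rightarrow> 'v set set \<Rightarrow> 'v list \<Rightarrow> bool" where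
  "is_cycle V E vs \<longleftrightarrow> distinct vs \<and> length vs \<ge> 3 \<and> set vs \<subseteq> V \<and>
     (\<forall>i<length vs. {vs ! i, vs ! ((i + 1) mod length vs)} \<in> E)"

definition is_tree :: "'v set \<Rightarrow> 'v set set \<Rightarrow> bool" where
  "is_tree V E \<longleftrightarrow> graph V E \<and> V \<noteq> {} \<and> graph_connected V E \<and>
     \<not> has_loop E \<and> (\<nexists>vs. is_cycle V E vs)"

definition injs :: "'v set \<Rightarrow> nat \<Rightarrow> ('v \<Rightarrow> nat) set" where
  "injs V n = {F. F \<in> V \<rightarrow>\<^sub>E {1..n} \<and> inj_on F V}"

definition end1 :: "'v set \<Rightarrow> 'v" where "end1 e = (SOME u. u \<in> e)"
definition end2 :: "'v set \<Rightarrow> 'v" where "end2 e = (SOME v. e = {end1 e, v})"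

definition cvar :: "'a measure \<Rightarrow> ('a \<Rightarrow> complex) \<Rightarrow> real" where
  "cvar M X = (\<integral>x. (cmod (X x - (\<integral>y. X y \<partial>M)))\<^sup>2 \<partial>M)"

text \<open>P(G,F) for the variance profile s i j = Var[w_ij].\<close>
definition Pw :: "'v set set \<Rightarrow> (nat \<Rightarrow> nat \<Rightarrow> real) \<Rightarrow> ('v \<Rightarrow> nat) \<Rightarrow> real" where
  "Pw E s F = (\<Prod>e\<in>E. s (F (end1 e)) (F (end2 e)))"

end

theory Submission
  imports Defs
begin

text \<open>Write \<open>s\<^sub>i\<^sub>j\<close> for \<open>Var[w\<^sub>i\<^sub>j]\<close>. Every tree arises from a single vertex by repeatedly
  attaching leaves. In the sum of \<open>P(T,F)\<close> over all maps \<open>F : V \<rightarrow> [n]\<close>, injective or not,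
  weighted by functions \<open>\<phi>\<^sub>u\<close> on \<open>[n]\<close> attached to the vertices, summing out a leaf \<open>l\<close>
  hanging at \<open>p\<close> multiplies \<open>\<phi>\<^sub>p\<close> by the vector \<open>S\<phi>\<^sub>l\<close>, where \<open>S = (s\<^sub>i\<^sub>j)\<close>.
  Since the row sums of \<open>S\<close> are bounded by \<open>C\<close> and equal to 1 up to an error that is
  small on average, \<open>S\<close> maps bounded weights that are close to 1 on average to weights
  with the same property, so the sum over all maps is \<open>n(1 + o(1))\<close>. A non-injective map
  identifies two vertices \<open>u \<noteq> v\<close>; peeling leaves until one of them is a leaf, the
  identification costs a factor \<open>s\<^sub>i\<^sub>j \<le> \<eta>\<^sub>n\<^sup>2\<close>, so these maps contribute only
  \<open>O(\<eta>\<^sub>n\<^sup>2 n) = o(n)\<close>.\<close>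

section \<open>Trees grown by attaching leaves\<close>

inductive leaf_tree :: "'v set \<Rightarrow> 'v set set \<Rightarrow> bool" where
  singleton: "leaf_tree {r} {}"
| add_leaf: "leaf_tree V E \<Longrightarrow> p \<in> V \<Longrightarrow> l \<notin> V \<Longrightarrow> leaf_tree (insert l V) (insert {p, l} E)"

lemma leaf_tree_graph: "leaf_tree V E \<Longrightarrow> graph V E"
  by (induction rule: leaf_tree.induct) (auto simp: graph_def)

lemma graph_finite_edges:
  assumes "graph V E"
  shows "finite E"
proof (rule finite_subset)
  show "E \<subseteq> (\<lambda>(u, v). {u, v}) ` (V \<times> V)"
    using assms unfolding graph_def by fast
  show "finite ((\<lambda>(u, v). {u, v}) ` (V \<times> V))"
    using assms unfolding graph_def by simp
qed

definition is_path :: "'v set set \<Rightarrow> 'v list \<Rightarrow> bool" where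
  "is_path E xs \<longleftrightarrow> distinct xs \<and> (\<forall>i. Suc i < length xs \<longrightarrow> {xs ! i, xs ! Suc i} \<in> E)"

lemma is_path_drop: "is_path E xs \<Longrightarrow> is_path E (drop j xs)"
  unfolding is_path_def by (auto simp: add.commute[of j])

lemma is_path_snoc:
  assumes path: "is_path E xs" and "xs \<noteq> []" "z \<notin> set xs" "{last xs, z} \<in> E"
  shows "is_path E (xs @ [z])"
  unfolding is_path_def
proof (intro conjI allI impI)
  show "distinct (xs @ [z])" using path assms(3) by (simp add: is_path_def)
  fix i assume "Suc i < length (xs @ [z])"
  then consider "Suc i < length xs" | "i = length xs - 1" by fastforce
  then show "{(xs @ [z]) ! i, (xs @ [z]) ! Suc i} \<in> E"
  proof cases
    case 1
    then show ?thesis using path by (simp add: is_path_def nth_append)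
  next
    case 2
    then show ?thesis using assms(2,4) by (simp add: nth_append last_conv_nth)
  qed
qed

lemma is_path_closed_is_cycle:
  assumes "is_path E xs" "set xs \<subseteq> V" "3 \<le> length xs" "{last xs, hd xs} \<in> E"
  shows "is_cycle V E xs"
  unfolding is_cycle_def
proof (intro conjI allI impI)
  fix i assume i: "i < length xs"
  show "{xs ! i, xs ! ((i + 1) mod length xs)} \<in> E"
  proof (cases "Suc i < length xs")
    case True
    then show ?thesis using assms(1) unfolding is_path_def by simp
  next
    case False
    then have "Suc i = length xs" using i by simp
    then have "i = length xs - 1" "(i + 1) mod length xs = 0" by simp_all
    moreover have "xs \<noteq> []" using assms(3) by auto
    ultimately show ?thesis using assms(4) by (simp add: last_conv_nth hd_conv_nth)
  qed
qed (use assms in \<open>auto simp: is_path_def\<close>)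

lemma longest_path_exists:
  assumes "finite V" "is_path E ys" "set ys \<subseteq> V" "2 \<le> length ys"
  obtains xs where "is_path E xs" "set xs \<subseteq> V" "2 \<le> length xs"
    "\<And>zs. is_path E zs \<Longrightarrow> set zs \<subseteq> V \<Longrightarrow> length zs \<le> length xs"
proof -
  let ?P = "\<lambda>k. \<exists>xs. is_path E xs \<and> set xs \<subseteq> V \<and> length xs = k"
  have bounded: "k \<le> card V" if "?P k" for k
    using that assms(1) by (auto simp: is_path_def distinct_card[symmetric] intro: card_mono)
  obtain k where "?P k" and k_max: "\<And>k'. ?P k' \<Longrightarrow> k' \<le> k"
    using Nat.ex_has_greatest_nat[where P = ?P and k = "length ys" and b = "card V"] assms(2,3) bounded
    by blast
  then obtain xs where "is_path E xs" "set xs \<subseteq> V" "length xs = k" by blast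
  moreover have "length ys \<le> k" using k_max assms(2,3) by blast
  then have "2 \<le> length xs" using assms(4) \<open>length xs = k\<close> by simp
  ultimately show thesis using that k_max by blast
qed

lemma longest_path_last_neighbour:
  assumes acyclic: "\<nexists>vs. is_cycle V E vs"
    and xs: "is_path E xs" "set xs \<subseteq> V" "2 \<le> length xs"
    and longest: "\<And>zs. is_path E zs \<Longrightarrow> set zs \<subseteq> V \<Longrightarrow> length zs \<le> length xs"
    and z: "{last xs, z} \<in> E" "z \<in> V" "z \<noteq> last xs"
  shows "z = xs ! (length xs - 2)"
proof (cases "z \<in> set xs")
  case False
  then have "is_path E (xs @ [z])" using xs z(1) by (intro is_path_snoc) auto
  then show ?thesis using longest[of "xs @ [z]"] xs(2) z(2) by simp
next
  case True
  then obtain j where j: "j < length xs" "xs ! j = z" by (metis in_set_conv_nth)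
  have "xs \<noteq> []" using xs(3) by auto
  then have "j \<noteq> length xs - 1" using j z(3) by (auto simp: last_conv_nth)
  show ?thesis
  proof (rule ccontr)
    assume "z \<noteq> xs ! (length xs - 2)"
    then have "j \<noteq> length xs - 2" using j by auto
    then have "3 \<le> length (drop j xs)" using j \<open>j \<noteq> length xs - 1\<close> by auto
    moreover have "{last (drop j xs), hd (drop j xs)} \<in> E" using z(1) j by (simp add: hd_drop_conv_nth)
    ultimately have "is_cycle V E (drop j xs)"
      using xs(1,2) by (intro is_path_closed_is_cycle is_path_drop) (auto dest: in_set_dropD)
    then show False using acyclic by blast
  qed
qed

lemma is_tree_edge_exists:
  assumes T: "is_tree V E" and two: "2 \<le> card V"
  obtains a b where "a \<in> V" "b \<in> V" "a \<noteq> b" "{a, b} \<in> E"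
proof -
  have "finite V" and gr: "\<forall>e\<in>E. \<exists>u\<in>V. \<exists>v\<in>V. e = {u, v}"
    and con: "graph_connected V E" and no_loop: "\<not> has_loop E"
    using T unfolding is_tree_def graph_def by blast+
  have "\<not> card V \<le> Suc 0" using two by simp
  then obtain a c where "a \<in> V" "c \<in> V" "c \<noteq> a" using \<open>finite V\<close> by (auto simp: card_le_Suc0_iff_eq)
  then have "(a, c) \<in> {(x, y). {x, y} \<in> E}\<^sup>*" using con unfolding graph_connected_def by blast
  then obtain b where b: "{a, b} \<in> E"
    using \<open>c \<noteq> a\<close> by (cases rule: converse_rtranclE) auto
  moreover have "a \<noteq> b" using b no_loop unfolding has_loop_def by auto
  moreover have "b \<in> V" using gr b by (fastforce simp: doubleton_eq_iff)
  ultimately show thesis using that \<open>a \<in> V\<close> by blast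
qed

lemma leaf_exists:
  assumes T: "is_tree V E" and two: "2 \<le> card V"
  obtains l p where "l \<in> V" "p \<in> V" "p \<noteq> l" "{p, l} \<in> E" "\<And>e. e \<in> E \<Longrightarrow> l \<in> e \<Longrightarrow> e = {p, l}"
proof -
  have fin: "finite V" and gr: "\<forall>e\<in>E. \<exists>u\<in>V. \<exists>v\<in>V. e = {u, v}"
    and no_loop: "\<not> has_loop E" and acyclic: "\<nexists>vs. is_cycle V E vs"
    using T unfolding is_tree_def graph_def by blast+
  obtain a b where "a \<in> V" "b \<in> V" "a \<noteq> b" "{a, b} \<in> E" using is_tree_edge_exists[OF T two] .
  then have "is_path E [a, b]" "set [a, b] \<subseteq> V" by (auto simp: is_path_def less_Suc_eq nth_Cons')
  then obtain xs where xs: "is_path E xs" "set xs \<subseteq> V" "2 \<le> length xs"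
    and longest: "\<And>zs. is_path E zs \<Longrightarrow> set zs \<subseteq> V \<Longrightarrow> length zs \<le> length xs"
    by (rule longest_path_exists[OF fin]) auto
  define l where "l = last xs"
  define p where "p = xs ! (length xs - 2)"
  have "xs \<noteq> []" using xs(3) by auto
  moreover have "Suc (length xs - 2) = length xs - 1" using xs(3) by simp
  ultimately have l_nth: "l = xs ! Suc (length xs - 2)" by (simp add: l_def last_conv_nth)
  have "l \<in> V" "p \<in> V" using xs(2,3) \<open>xs \<noteq> []\<close> by (auto simp: l_def p_def)
  moreover have "p \<noteq> l" using xs(1,3) by (simp add: l_nth p_def is_path_def nth_eq_iff_index_eq)
  moreover have "{p, l} \<in> E" using xs(1,3) by (simp add: l_nth p_def is_path_def)
  moreover have "e = {p, l}" if e: "e \<in> E" "l \<in> e" for e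
  proof -
    obtain u v where uv: "u \<in> V" "v \<in> V" "e = {u, v}" using gr e(1) by blast
    define z where "z = (if u = l then v else u)"
    have ez: "e = {l, z}" and "z \<in> V" using uv e(2) by (auto simp: z_def)
    moreover have "z \<noteq> l" using no_loop e ez unfolding has_loop_def by auto
    ultimately have "z = p"
      unfolding p_def using e(1) l_def by (intro longest_path_last_neighbour[OF acyclic xs longest]) auto
    then show ?thesis using ez by (simp add: insert_commute)
  qed
  ultimately show thesis using that by blast
qed

lemma graph_connected_remove_leaf:
  assumes con: "graph_connected V E" and "p \<noteq> l"
    and leaf: "\<And>e. e \<in> E \<Longrightarrow> l \<in> e \<Longrightarrow> e = {p, l}"
  shows "graph_connected (V - {l}) (E - {{p, l}})"
proof -
  let ?R = "{(x, y). {x, y} \<in> E}" and ?R' = "{(x, y). {x, y} \<in> E - {{p, l}}}"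
  have reach: "(y \<noteq> l \<longrightarrow> (u, y) \<in> ?R'\<^sup>*) \<and> (y = l \<longrightarrow> (u, p) \<in> ?R'\<^sup>*)"
    if "(u, y) \<in> ?R\<^sup>*" "u \<noteq> l" for u y
    using that
  proof (induction rule: rtrancl_induct)
    case (step y z)
    then have yz: "{y, z} \<in> E" by simp
    consider "y \<noteq> l" "z \<noteq> l" | "y = l" "z \<noteq> l" | "y \<noteq> l" "z = l" | "y = l" "z = l" by blast
    then show ?case
    proof cases
      case 1
      then have "(y, z) \<in> ?R'" using yz by (auto simp: doubleton_eq_iff)
      then show ?thesis using step 1 by (meson rtrancl.rtrancl_into_rtrancl)
    next
      case 2
      then have "z = p" using leaf[OF yz] \<open>p \<noteq> l\<close> by (auto simp: doubleton_eq_iff)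
      then show ?thesis using step 2 by simp
    next
      case 3
      then have "y = p" using leaf[OF yz] \<open>p \<noteq> l\<close> by (auto simp: doubleton_eq_iff)
      then show ?thesis using step 3 by simp
    qed (use step in simp)
  qed simp
  show ?thesis
    using con reach unfolding graph_connected_def by blast
qed

lemma is_tree_remove_leaf:
  assumes T: "is_tree V E" and "p \<in> V" "p \<noteq> l"
    and leaf: "\<And>e. e \<in> E \<Longrightarrow> l \<in> e \<Longrightarrow> e = {p, l}"
  shows "is_tree (V - {l}) (E - {{p, l}})"
proof -
  have "finite V" and gr: "\<forall>e\<in>E. \<exists>u\<in>V. \<exists>v\<in>V. e = {u, v}" and "graph_connected V E"
    and "\<not> has_loop E" and acyclic: "\<nexists>vs. is_cycle V E vs"
    using T unfolding is_tree_def graph_def by blast+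
  have "\<exists>u\<in>V - {l}. \<exists>v\<in>V - {l}. e = {u, v}" if "e \<in> E - {{p, l}}" for e
    using gr leaf that by fastforce
  then have "graph (V - {l}) (E - {{p, l}})" using \<open>finite V\<close> unfolding graph_def by blast
  moreover have "graph_connected (V - {l}) (E - {{p, l}})"
    by (rule graph_connected_remove_leaf) fact+
  moreover have "\<not> has_loop (E - {{p, l}})" using \<open>\<not> has_loop E\<close> unfolding has_loop_def by blast
  moreover have "\<not> is_cycle (V - {l}) (E - {{p, l}}) vs" for vs
    using acyclic unfolding is_cycle_def by blast
  ultimately show ?thesis using \<open>p \<in> V\<close> \<open>p \<noteq> l\<close> unfolding is_tree_def by blast
qed

lemma is_tree_imp_leaf_tree: "is_tree V E \<Longrightarrow> leaf_tree V E"
proof (induction "card V" arbitrary: V E rule: less_induct)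
  case less
  have fin: "finite V" and "V \<noteq> {}" and gr: "\<forall>e\<in>E. \<exists>u\<in>V. \<exists>v\<in>V. e = {u, v}"
    and no_loop: "\<not> has_loop E"
    using less.prems unfolding is_tree_def graph_def by blast+
  show ?case
  proof (cases "card V = 1")
    case True
    then obtain r where r: "V = {r}" by (meson card_1_singletonE)
    then have "E = {}" using gr no_loop unfolding has_loop_def by fastforce
    then show ?thesis using r leaf_tree.singleton by simp
  next
    case False
    moreover have "card V \<noteq> 0" using fin \<open>V \<noteq> {}\<close> by simp
    ultimately have "2 \<le> card V" by linarith
    then obtain l p where lp: "l \<in> V" "p \<in> V" "p \<noteq> l" "{p, l} \<in> E"
      and leaf: "\<And>e. e \<in> E \<Longrightarrow> l \<in> e \<Longrightarrow> e = {p, l}"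
      using leaf_exists[OF less.prems] by blast
    have "leaf_tree (V - {l}) (E - {{p, l}})"
      using less.hyps is_tree_remove_leaf[OF less.prems lp(2,3) leaf] lp(1) fin
      by (meson card_Diff1_less)
    then have "leaf_tree (insert l (V - {l})) (insert {p, l} (E - {{p, l}}))"
      using lp(2,3) by (intro leaf_tree.add_leaf) auto
    moreover have "insert l (V - {l}) = V" "insert {p, l} (E - {{p, l}}) = E" using lp by auto
    ultimately show ?thesis by simp
  qed
qed

section \<open>Weighted sums over vertex maps\<close>

lemma ends_of_edge: "{end1 {u, v}, end2 {u, v}} = {u, v}"
proof -
  have "end1 {u, v} \<in> {u, v}" unfolding end1_def by (rule someI[of _ u]) simp
  then have "\<exists>y. {u, v} = {end1 {u, v}, y}" by auto
  then have "{u, v} = {end1 {u, v}, end2 {u, v}}" unfolding end2_def by (rule someI_ex)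
  then show ?thesis by simp
qed

lemma ends_in_edge: "end1 {u, v} \<in> {u, v}" "end2 {u, v} \<in> {u, v}"
  using ends_of_edge[of u v] by blast+

lemma Pw_nonneg:
  assumes "graph V E" "F \<in> V \<rightarrow>\<^sub>E {1..n}" "\<And>i j. i \<in> {1..n} \<Longrightarrow> j \<in> {1..n} \<Longrightarrow> 0 \<le> a i j"
  shows "0 \<le> Pw E a F"
  unfolding Pw_def
proof (rule prod_nonneg)
  fix e assume "e \<in> E"
  then obtain u v where "u \<in> V" "v \<in> V" "e = {u, v}" using assms(1) unfolding graph_def by blast
  then have "end1 e \<in> V" "end2 e \<in> V" using ends_in_edge[of u v] by auto
  then show "0 \<le> a (F (end1 e)) (F (end2 e))" using assms(2) by (intro assms(3)) auto
qed

lemma sum_PiE_insert: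
  assumes "l \<notin> V"
  shows "(\<Sum>F\<in>PiE (insert l V) B. h F) = (\<Sum>g\<in>PiE V B. \<Sum>k\<in>B l. h (g(l := k)))"
proof -
  have "(\<Sum>F\<in>PiE (insert l V) B. h F) = (\<Sum>(k, g)\<in>B l \<times> PiE V B. h (g(l := k)))"
    unfolding PiE_insert_eq
    by (subst sum.reindex) (use inj_combinator[OF assms] in \<open>simp_all add: case_prod_beta\<close>)
  also have "\<dots> = (\<Sum>k\<in>B l. \<Sum>g\<in>PiE V B. h (g(l := k)))"
    by (simp add: sum.cartesian_product)
  finally show ?thesis by (simp add: sum.swap[of _ "B l"])
qed

definition matvec :: "nat \<Rightarrow> (nat \<Rightarrow> nat \<Rightarrow> real) \<Rightarrow> (nat \<Rightarrow> real) \<Rightarrow> nat \<Rightarrow> real" where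
  "matvec n a f j = (\<Sum>k=1..n. a j k * f k)"

definition hom_sum :: "nat \<Rightarrow> (nat \<Rightarrow> nat \<Rightarrow> real) \<Rightarrow> 'v set \<Rightarrow> 'v set set \<Rightarrow>
    (('v \<Rightarrow> nat) \<Rightarrow> real) \<Rightarrow> ('v \<Rightarrow> nat \<Rightarrow> real) \<Rightarrow> real" where
  "hom_sum n a V E \<theta> \<phi> = (\<Sum>F\<in>V \<rightarrow>\<^sub>E {1..n}. \<theta> F * Pw E a F * (\<Prod>u\<in>V. \<phi> u (F u)))"

lemma hom_sum_singleton: "hom_sum n a {r} {} \<theta> \<phi> = (\<Sum>k=1..n. \<theta> ((\<lambda>_. undefined)(r := k)) * \<phi> r k)"
  unfolding hom_sum_def Pw_def by (subst sum_PiE_insert) (auto simp: fun_upd_def)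

lemma hom_sum_add_leaf_expand:
  assumes G: "graph V E" and "p \<in> V" "l \<notin> V"
    and sym: "\<forall>i\<in>{1..n}. \<forall>j\<in>{1..n}. a i j = a j i"
  shows "hom_sum n a (insert l V) (insert {p, l} E) \<theta> \<phi> =
    (\<Sum>g\<in>V \<rightarrow>\<^sub>E {1..n}. \<Sum>k=1..n. \<theta> (g(l := k)) * a (g p) k * \<phi> l k * (Pw E a g * (\<Prod>u\<in>V. \<phi> u (g u))))"
  unfolding hom_sum_def sum_PiE_insert[OF \<open>l \<notin> V\<close>]
proof (intro sum.cong refl)
  fix g k assume "g \<in> V \<rightarrow>\<^sub>E {1..n}" and k: "k \<in> {1..n}"
  then have "g p \<in> {1..n}" using \<open>p \<in> V\<close> by auto
  have "finite V" "finite E" using G graph_finite_edges unfolding graph_def by auto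
  have l_off: "l \<notin> e" if "e \<in> E" for e using G that \<open>l \<notin> V\<close> unfolding graph_def by auto
  then have "{p, l} \<notin> E" by blast
  have "Pw E a (g(l := k)) = Pw E a g"
    unfolding Pw_def
  proof (intro prod.cong refl)
    fix e assume "e \<in> E"
    then obtain u v where "e = {u, v}" using G unfolding graph_def by blast
    then have "end1 e \<noteq> l" "end2 e \<noteq> l" using l_off[OF \<open>e \<in> E\<close>] ends_of_edge[of u v] by auto
    then show "a ((g(l := k)) (end1 e)) ((g(l := k)) (end2 e)) = a (g (end1 e)) (g (end2 e))" by simp
  qed
  \<comment> \<open>\<open>Pw\<close> orients the new edge arbitrarily, hence the symmetry of \<open>a\<close>\<close>
  moreover have "a ((g(l := k)) (end1 {p, l})) ((g(l := k)) (end2 {p, l})) = a (g p) k"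
    using ends_of_edge[of p l] \<open>p \<in> V\<close> \<open>l \<notin> V\<close> sym \<open>g p \<in> {1..n}\<close> k
    by (auto simp: doubleton_eq_iff)
  ultimately have "Pw (insert {p, l} E) a (g(l := k)) = a (g p) k * Pw E a g"
    using \<open>finite E\<close> \<open>{p, l} \<notin> E\<close> by (simp add: Pw_def)
  moreover have "(\<Prod>u\<in>V. \<phi> u ((g(l := k)) u)) = (\<Prod>u\<in>V. \<phi> u (g u))"
    using \<open>l \<notin> V\<close> by (intro prod.cong refl) auto
  then have "(\<Prod>u\<in>insert l V. \<phi> u ((g(l := k)) u)) = \<phi> l k * (\<Prod>u\<in>V. \<phi> u (g u))"
    using \<open>finite V\<close> \<open>l \<notin> V\<close> by simp
  ultimately show "\<theta> (g(l := k)) * Pw (insert {p, l} E) a (g(l := k)) * (\<Prod>u\<in>insert l V. \<phi> u ((g(l := k)) u)) =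
      \<theta> (g(l := k)) * a (g p) k * \<phi> l k * (Pw E a g * (\<Prod>u\<in>V. \<phi> u (g u)))"
    by (simp add: algebra_simps)
qed

lemma hom_sum_add_leaf:
  assumes G: "graph V E" and "p \<in> V" "l \<notin> V"
    and sym: "\<forall>i\<in>{1..n}. \<forall>j\<in>{1..n}. a i j = a j i"
    and \<theta>: "\<And>g k. \<theta> (g(l := k)) = \<theta>' g"
  shows "hom_sum n a (insert l V) (insert {p, l} E) \<theta> \<phi> =
    hom_sum n a V E \<theta>' (\<phi>(p := \<lambda>j. \<phi> p j * matvec n a (\<phi> l) j))"
proof -
  have "finite V" using G unfolding graph_def by simp
  have absorb: "(\<Prod>u\<in>V. (\<phi>(p := \<lambda>j. \<phi> p j * matvec n a (\<phi> l) j)) u (g u))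
      = matvec n a (\<phi> l) (g p) * (\<Prod>u\<in>V. \<phi> u (g u))" for g
    using \<open>finite V\<close> \<open>p \<in> V\<close> by (simp add: prod.remove mult_ac)
  have per_map: "(\<Sum>k=1..n. \<theta> (g(l := k)) * a (g p) k * \<phi> l k * (Pw E a g * (\<Prod>u\<in>V. \<phi> u (g u))))
      = \<theta>' g * Pw E a g * (\<Prod>u\<in>V. (\<phi>(p := \<lambda>j. \<phi> p j * matvec n a (\<phi> l) j)) u (g u))" for g
    unfolding absorb by (simp add: matvec_def \<theta> sum_distrib_left sum_distrib_right mult_ac)
  have "hom_sum n a (insert l V) (insert {p, l} E) \<theta> \<phi> = (\<Sum>g\<in>V \<rightarrow>\<^sub>E {1..n}.
      \<Sum>k=1..n. \<theta> (g(l := k)) * a (g p) k * \<phi> l k * (Pw E a g * (\<Prod>u\<in>V. \<phi> u (g u))))"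
    by (rule hom_sum_add_leaf_expand[OF G \<open>p \<in> V\<close> \<open>l \<notin> V\<close> sym])
  also have "\<dots> = hom_sum n a V E \<theta>' (\<phi>(p := \<lambda>j. \<phi> p j * matvec n a (\<phi> l) j))"
    unfolding hom_sum_def by (rule sum.cong[OF refl per_map])
  finally show ?thesis .
qed

lemma hom_sum_leaf_collision:
  assumes G: "graph V E" and "p \<in> V" "l \<notin> V" "u \<in> V"
    and sym: "\<forall>i\<in>{1..n}. \<forall>j\<in>{1..n}. a i j = a j i"
  shows "hom_sum n a (insert l V) (insert {p, l} E) (\<lambda>F. if F u = F l then 1 else 0) \<phi> =
    hom_sum n a V E (\<lambda>g. a (g p) (g u) * \<phi> l (g u)) \<phi>"
proof -
  let ?X = "\<lambda>g. Pw E a g * (\<Prod>v\<in>V. \<phi> v (g v))"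
  have "u \<noteq> l" using \<open>u \<in> V\<close> \<open>l \<notin> V\<close> by blast
  then have "hom_sum n a (insert l V) (insert {p, l} E) (\<lambda>F. if F u = F l then 1 else 0) \<phi>
      = (\<Sum>g\<in>V \<rightarrow>\<^sub>E {1..n}. \<Sum>k=1..n. (if g u = k then 1 else 0) * a (g p) k * \<phi> l k * ?X g)"
    using hom_sum_add_leaf_expand[OF G \<open>p \<in> V\<close> \<open>l \<notin> V\<close> sym] by (simp add: eq_commute[of _ u])
  also have "\<dots> = (\<Sum>g\<in>V \<rightarrow>\<^sub>E {1..n}. a (g p) (g u) * \<phi> l (g u) * ?X g)"
  proof (intro sum.cong refl)
    fix g assume "g \<in> V \<rightarrow>\<^sub>E {1..n}"
    then have "g u \<in> {1..n}" using \<open>u \<in> V\<close> by auto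
    have "(\<Sum>k=1..n. (if g u = k then 1 else 0) * a (g p) k * \<phi> l k * ?X g)
        = (\<Sum>k=1..n. if g u = k then a (g p) k * \<phi> l k * ?X g else 0)"
      by (intro sum.cong) auto
    also have "\<dots> = a (g p) (g u) * \<phi> l (g u) * ?X g"
      using \<open>g u \<in> {1..n}\<close> by (simp add: sum.delta)
    finally show "(\<Sum>k=1..n. (if g u = k then 1 else 0) * a (g p) k * \<phi> l k * ?X g)
        = a (g p) (g u) * \<phi> l (g u) * ?X g" .
  qed
  also have "\<dots> = hom_sum n a V E (\<lambda>g. a (g p) (g u) * \<phi> l (g u)) \<phi>"
    unfolding hom_sum_def by (simp add: mult.assoc)
  finally show ?thesis .
qed

lemma hom_sum_le_scaled:
  assumes "graph V E" "\<And>i j. i \<in> {1..n} \<Longrightarrow> j \<in> {1..n} \<Longrightarrow> 0 \<le> a i j"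
    "\<And>u i. i \<in> {1..n} \<Longrightarrow> 0 \<le> \<phi> u i" and \<theta>: "\<And>F. F \<in> V \<rightarrow>\<^sub>E {1..n} \<Longrightarrow> \<theta> F \<le> c"
  shows "hom_sum n a V E \<theta> \<phi> \<le> c * hom_sum n a V E (\<lambda>_. 1) \<phi>"
  unfolding hom_sum_def sum_distrib_left
proof (rule sum_mono)
  fix F assume F: "F \<in> V \<rightarrow>\<^sub>E {1..n}"
  have "0 \<le> Pw E a F * (\<Prod>u\<in>V. \<phi> u (F u))"
    using Pw_nonneg[OF assms(1) F assms(2)] assms(3) PiE_mem[OF F] by (simp add: prod_nonneg)
  then show "\<theta> F * Pw E a F * (\<Prod>u\<in>V. \<phi> u (F u)) \<le> c * (1 * Pw E a F * (\<Prod>u\<in>V. \<phi> u (F u)))"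
    using \<theta>[OF F] by (simp add: mult.assoc mult_right_mono)
qed

lemma sum_injs_le:
  fixes f :: "('v \<Rightarrow> nat) \<Rightarrow> real"
  assumes "finite V" "\<And>F. F \<in> V \<rightarrow>\<^sub>E {1..n} \<Longrightarrow> 0 \<le> f F"
  shows "(\<Sum>F\<in>injs V n. f F) \<le> (\<Sum>F\<in>V \<rightarrow>\<^sub>E {1..n}. f F)"
  using assms by (intro sum_mono2) (auto simp: injs_def finite_PiE)

lemma sum_injs_ge:
  fixes f :: "('v \<Rightarrow> nat) \<Rightarrow> real"
  assumes "finite V" and f: "\<And>F. F \<in> V \<rightarrow>\<^sub>E {1..n} \<Longrightarrow> 0 \<le> f F"
  shows "(\<Sum>F\<in>V \<rightarrow>\<^sub>E {1..n}. f F)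
    - (\<Sum>d\<in>{(u, v) \<in> V \<times> V. u \<noteq> v}. \<Sum>F\<in>V \<rightarrow>\<^sub>E {1..n}. (if F (fst d) = F (snd d) then 1 else 0) * f F)
    \<le> (\<Sum>F\<in>injs V n. f F)"
proof -
  let ?P = "V \<rightarrow>\<^sub>E {1..n}" and ?D = "{(u, v) \<in> V \<times> V. u \<noteq> v}"
  let ?c = "\<lambda>F. \<Sum>d\<in>?D. (if F (fst d) = F (snd d) then 1 else 0) * f F"
  have fin: "finite ?P" "finite ?D"
    using \<open>finite V\<close> by (auto simp: finite_PiE intro: finite_subset[of _ "V \<times> V"])
  have injs: "injs V n \<subseteq> ?P" by (auto simp: injs_def)
  have c_nonneg: "0 \<le> ?c F" if "F \<in> ?P" for F
    using f[OF that] by (intro sum_nonneg) simp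
  have "f F \<le> ?c F" if F: "F \<in> ?P - injs V n" for F
  proof -
    obtain u v where d: "(u, v) \<in> ?D" and "F u = F v"
      using F unfolding injs_def inj_on_def by auto
    then have "f F = (if F (fst (u, v)) = F (snd (u, v)) then 1 else 0) * f F" by simp
    also have "\<dots> \<le> ?c F"
      using f F fin(2) by (intro member_le_sum[OF d]) auto
    finally show ?thesis .
  qed
  then have "(\<Sum>F\<in>?P - injs V n. f F) \<le> (\<Sum>F\<in>?P - injs V n. ?c F)" by (rule sum_mono)
  also have "\<dots> \<le> (\<Sum>F\<in>?P. ?c F)" using fin(1) c_nonneg by (intro sum_mono2) auto
  also have "\<dots> = (\<Sum>d\<in>?D. \<Sum>F\<in>?P. (if F (fst d) = F (snd d) then 1 else 0) * f F)"
    by (rule sum.swap)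
  finally show ?thesis
    using sum.subset_diff[OF injs fin(1), of f] by simp
qed

section \<open>Variances of complex random variables\<close>

lemma cvar_nonneg: "0 \<le> cvar M X"
  unfolding cvar_def by (rule Bochner_Integration.integral_nonneg) simp

lemma cvar_cong: "(\<And>x. x \<in> space M \<Longrightarrow> X x = Y x) \<Longrightarrow> cvar M X = cvar M Y"
  unfolding cvar_def by (simp cong: Bochner_Integration.integral_cong)

lemma cvar_cnj: "cvar M (\<lambda>x. cnj (X x)) = cvar M X"
proof -
  have "cmod (cnj (X x) - cnj m) = cmod (X x - m)" for x m
    by (metis complex_cnj_diff complex_mod_cnj)
  then show ?thesis unfolding cvar_def by simp
qed

lemma cvar_le_of_mean_zero:
  assumes "prob_space M" "(\<integral>x. X x \<partial>M) = 0" "\<And>x. x \<in> space M \<Longrightarrow> cmod (X x) \<le> c"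
  shows "cvar M X \<le> c\<^sup>2"
proof -
  interpret prob_space M by (rule assms(1))
  have cvar_eq: "cvar M X = (\<integral>x. (cmod (X x))\<^sup>2 \<partial>M)" using assms(2) by (simp add: cvar_def)
  show ?thesis
  proof (cases "integrable M (\<lambda>x. (cmod (X x))\<^sup>2)")
    case True
    have "(\<integral>x. (cmod (X x))\<^sup>2 \<partial>M) \<le> (\<integral>x. c\<^sup>2 \<partial>M)"
      using assms(3) by (intro integral_mono[OF True]) (auto intro: power_mono)
    then show ?thesis using cvar_eq prob_space by simp
  next
    case False
    then show ?thesis using cvar_eq by (simp add: not_integrable_integral_eq)
  qed
qed

section \<open>Variance profiles\<close>

definition dev_from_one :: "(nat \<Rightarrow> nat \<Rightarrow> real) \<Rightarrow> nat \<Rightarrow> real" where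
  "dev_from_one f n = (1 / real n) * (\<Sum>i=1..n. \<bar>f n i - 1\<bar>)"

definition weights_bounded :: "real \<Rightarrow> ('v \<Rightarrow> nat \<Rightarrow> nat \<Rightarrow> real) \<Rightarrow> bool" where
  "weights_bounded K \<phi> \<longleftrightarrow> (\<forall>u n i. i \<in> {1..n} \<longrightarrow> 0 \<le> \<phi> u n i \<and> \<phi> u n i \<le> K)"

definition absorb_leaf :: "(nat \<Rightarrow> nat \<Rightarrow> nat \<Rightarrow> real) \<Rightarrow> 'v \<Rightarrow> 'v \<Rightarrow>
    ('v \<Rightarrow> nat \<Rightarrow> nat \<Rightarrow> real) \<Rightarrow> 'v \<Rightarrow> nat \<Rightarrow> nat \<Rightarrow> real" where
  "absorb_leaf s p l \<phi> u n = (if u = p then (\<lambda>j. \<phi> p n j * matvec n (s n) (\<phi> l n) j) else \<phi> u n)"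

lemma dev_from_one_nonneg: "0 \<le> dev_from_one f n"
  unfolding dev_from_one_def by simp

lemma weights_bounded_nonneg:
  assumes "weights_bounded K \<phi>"
  shows "0 \<le> K"
proof -
  have "0 \<le> \<phi> u 1 1 \<and> \<phi> u 1 1 \<le> K" for u using assms unfolding weights_bounded_def by simp
  then show ?thesis by fastforce
qed

text \<open>In the application \<open>s n i j = Var[w\<^sub>i\<^sub>j\<^sup>(\<^sup>n\<^sup>)]\<close> and \<open>\<epsilon> n = \<eta>\<^sub>n\<^sup>2\<close>.\<close>

locale variance_profile =
  fixes s :: "nat \<Rightarrow> nat \<Rightarrow> nat \<Rightarrow> real" and C :: real and \<epsilon> :: "nat \<Rightarrow> real"
  assumes s_nonneg: "\<And>n i j. i \<in> {1..n} \<Longrightarrow> j \<in> {1..n} \<Longrightarrow> 0 \<le> s n i j"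
    and s_sym: "\<And>n i j. i \<in> {1..n} \<Longrightarrow> j \<in> {1..n} \<Longrightarrow> s n i j = s n j i"
    and row_sum_le: "\<And>n i. i \<in> {1..n} \<Longrightarrow> (\<Sum>j=1..n. s n i j) \<le> C"
    and s_le_eps: "\<And>n i j. i \<in> {1..n} \<Longrightarrow> j \<in> {1..n} \<Longrightarrow> s n i j \<le> \<epsilon> n"
    and eps_nonneg: "\<And>n. 0 \<le> \<epsilon> n"
    and eps_tendsto_0: "\<epsilon> \<longlonglongrightarrow> 0"
    and row_sums_dev_tendsto_0: "dev_from_one (\<lambda>n i. \<Sum>j=1..n. s n i j) \<longlonglongrightarrow> 0"
begin

lemma C_nonneg: "0 \<le> C"
  using s_nonneg[of 1 1 1] row_sum_le[of 1 1] by simp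

lemma matvec_bounds:
  assumes f: "\<And>i. i \<in> {1..n} \<Longrightarrow> 0 \<le> f i \<and> f i \<le> K" and j: "j \<in> {1..n}"
  shows "0 \<le> matvec n (s n) f j \<and> matvec n (s n) f j \<le> C * K"
proof
  show "0 \<le> matvec n (s n) f j" unfolding matvec_def using f j s_nonneg by (intro sum_nonneg) auto
  have "matvec n (s n) f j \<le> (\<Sum>k=1..n. s n j k * K)" unfolding matvec_def
    using f j s_nonneg by (intro sum_mono mult_left_mono) auto
  also have "\<dots> = K * (\<Sum>k=1..n. s n j k)" by (simp add: sum_distrib_left mult.commute)
  also have "\<dots> \<le> K * C" using row_sum_le[OF j] f[OF j] by (intro mult_left_mono) auto
  finally show "matvec n (s n) f j \<le> C * K" by (simp add: mult.commute)
qed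

lemma weights_bounded_absorb_leaf:
  assumes "weights_bounded K \<phi>"
  shows "weights_bounded (K + K * (C * K)) (absorb_leaf s p l \<phi>)"
  unfolding weights_bounded_def
proof (intro allI impI)
  fix u and n i :: nat assume i: "i \<in> {1..n}"
  have "0 \<le> K" "0 \<le> K * (C * K)" using weights_bounded_nonneg[OF assms] C_nonneg by simp_all
  have \<phi>: "0 \<le> \<phi> v n i \<and> \<phi> v n i \<le> K" for v using assms i unfolding weights_bounded_def by blast
  have "0 \<le> matvec n (s n) (\<phi> l n) i \<and> matvec n (s n) (\<phi> l n) i \<le> C * K"
    using assms i unfolding weights_bounded_def by (intro matvec_bounds) auto
  then have "0 \<le> \<phi> p n i * matvec n (s n) (\<phi> l n) i \<and> \<phi> p n i * matvec n (s n) (\<phi> l n) i \<le> K * (C * K)"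
    using \<phi>[of p] by (auto intro: mult_mono)
  then show "0 \<le> absorb_leaf s p l \<phi> u n i \<and> absorb_leaf s p l \<phi> u n i \<le> K + K * (C * K)"
    using \<phi>[of u] \<open>0 \<le> K\<close> \<open>0 \<le> K * (C * K)\<close> by (auto simp: absorb_leaf_def)
qed

lemma hom_sum_absorb_leaf:
  assumes "leaf_tree V E" "p \<in> V" "l \<notin> V" "\<And>g k. \<theta> (g(l := k)) = \<theta>' g"
  shows "hom_sum n (s n) (insert l V) (insert {p, l} E) \<theta> (\<lambda>u. \<phi> u n) =
    hom_sum n (s n) V E \<theta>' (\<lambda>u. absorb_leaf s p l \<phi> u n)"
proof -
  have "(\<lambda>u. absorb_leaf s p l \<phi> u n) = (\<lambda>u. \<phi> u n)(p := \<lambda>j. \<phi> p n j * matvec n (s n) (\<phi> l n) j)"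
    by (auto simp: absorb_leaf_def)
  moreover have "hom_sum n (s n) (insert l V) (insert {p, l} E) \<theta> (\<lambda>u. \<phi> u n) =
    hom_sum n (s n) V E \<theta>' ((\<lambda>u. \<phi> u n)(p := \<lambda>j. \<phi> p n j * matvec n (s n) (\<phi> l n) j))"
    by (rule hom_sum_add_leaf) (use assms leaf_tree_graph s_sym in auto)
  ultimately show ?thesis by simp
qed

lemma hom_sum_linear_bound:
  assumes "leaf_tree V E" "weights_bounded K \<phi>"
  shows "\<exists>B. \<forall>n. hom_sum n (s n) V E (\<lambda>_. 1) (\<lambda>u. \<phi> u n) \<le> B * real n"
  using assms
proof (induction arbitrary: \<phi> K rule: leaf_tree.induct)
  case (singleton r)
  have "hom_sum n (s n) {r} {} (\<lambda>_. 1) (\<lambda>u. \<phi> u n) \<le> K * real n" for n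
  proof -
    have "hom_sum n (s n) {r} {} (\<lambda>_. 1) (\<lambda>u. \<phi> u n) = (\<Sum>k=1..n. \<phi> r n k)"
      by (simp add: hom_sum_singleton)
    also have "\<dots> \<le> of_nat (card {1..n}) * K"
      using singleton.prems by (intro sum_bounded_above) (auto simp: weights_bounded_def)
    finally show ?thesis by (simp add: mult.commute)
  qed
  then show ?case by blast
next
  case (add_leaf V E p l)
  obtain B where "hom_sum n (s n) V E (\<lambda>_. 1) (\<lambda>u. absorb_leaf s p l \<phi> u n) \<le> B * real n" for n
    using add_leaf.IH weights_bounded_absorb_leaf[OF add_leaf.prems] by blast
  then show ?case
    using hom_sum_absorb_leaf[OF add_leaf.hyps, of "\<lambda>_. 1" "\<lambda>_. 1"] by auto
qed

lemma sum_matvec_le: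
  assumes "\<And>k. k \<in> {1..n} \<Longrightarrow> 0 \<le> g k"
  shows "(\<Sum>j=1..n. matvec n (s n) g j) \<le> C * (\<Sum>k=1..n. g k)"
proof -
  \<comment> \<open>by symmetry, the column sums of \<open>s n\<close> are its row sums\<close>
  have "(\<Sum>j=1..n. matvec n (s n) g j) = (\<Sum>k=1..n. (\<Sum>j=1..n. s n k j) * g k)"
    unfolding matvec_def by (subst sum.swap) (auto simp: sum_distrib_right s_sym intro!: sum.cong)
  also have "\<dots> \<le> (\<Sum>k=1..n. C * g k)"
    using row_sum_le assms by (intro sum_mono mult_right_mono) auto
  finally show ?thesis by (simp add: sum_distrib_left)
qed

lemma abs_matvec_sub_one_le:
  assumes "j \<in> {1..n}"
  shows "\<bar>matvec n (s n) f j - 1\<bar> \<le> matvec n (s n) (\<lambda>k. \<bar>f k - 1\<bar>) j + \<bar>(\<Sum>k=1..n. s n j k) - 1\<bar>"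
proof -
  have "matvec n (s n) f j - 1 = (\<Sum>k=1..n. s n j k * (f k - 1)) + ((\<Sum>k=1..n. s n j k) - 1)"
    unfolding matvec_def by (simp add: sum_subtractf algebra_simps)
  moreover have "\<bar>\<Sum>k=1..n. s n j k * (f k - 1)\<bar> \<le> matvec n (s n) (\<lambda>k. \<bar>f k - 1\<bar>) j"
    unfolding matvec_def using s_nonneg assms
    by (auto intro!: order.trans[OF sum_abs] sum_mono simp: abs_mult)
  ultimately show ?thesis by linarith
qed

lemma dev_from_one_absorb_le:
  assumes "0 \<le> K" and fp: "\<And>j. j \<in> {1..n} \<Longrightarrow> \<bar>fp n j\<bar> \<le> K"
  shows "dev_from_one (\<lambda>n j. fp n j * matvec n (s n) (fl n) j) n \<le>
    K * C * dev_from_one fl n + K * dev_from_one (\<lambda>n i. \<Sum>j=1..n. s n i j) n + dev_from_one fp n"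
proof -
  let ?d = "\<lambda>j. \<bar>(\<Sum>k=1..n. s n j k) - 1\<bar>"
  have pointwise: "\<bar>fp n j * matvec n (s n) (fl n) j - 1\<bar> \<le>
      K * (matvec n (s n) (\<lambda>k. \<bar>fl n k - 1\<bar>) j + ?d j) + \<bar>fp n j - 1\<bar>" if j: "j \<in> {1..n}" for j
  proof -
    have "fp n j * matvec n (s n) (fl n) j - 1 = fp n j * (matvec n (s n) (fl n) j - 1) + (fp n j - 1)"
      by (simp add: algebra_simps)
    then have "\<bar>fp n j * matvec n (s n) (fl n) j - 1\<bar> \<le> \<bar>fp n j\<bar> * \<bar>matvec n (s n) (fl n) j - 1\<bar> + \<bar>fp n j - 1\<bar>"
      by (simp add: abs_mult[symmetric])
    also have "\<dots> \<le> K * (matvec n (s n) (\<lambda>k. \<bar>fl n k - 1\<bar>) j + ?d j) + \<bar>fp n j - 1\<bar>"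
      using fp[OF j] abs_matvec_sub_one_le[OF j] by (intro add_right_mono mult_mono) auto
    finally show ?thesis .
  qed
  have "(\<Sum>j=1..n. \<bar>fp n j * matvec n (s n) (fl n) j - 1\<bar>) \<le>
      (\<Sum>j=1..n. K * (matvec n (s n) (\<lambda>k. \<bar>fl n k - 1\<bar>) j + ?d j) + \<bar>fp n j - 1\<bar>)"
    by (rule sum_mono) (rule pointwise)
  also have "\<dots> = K * (\<Sum>j=1..n. matvec n (s n) (\<lambda>k. \<bar>fl n k - 1\<bar>) j) + K * (\<Sum>j=1..n. ?d j)
      + (\<Sum>j=1..n. \<bar>fp n j - 1\<bar>)"
    by (simp add: sum.distrib sum_distrib_left distrib_left)
  also have "\<dots> \<le> K * (C * (\<Sum>k=1..n. \<bar>fl n k - 1\<bar>)) + K * (\<Sum>j=1..n. ?d j) + (\<Sum>j=1..n. \<bar>fp n j - 1\<bar>)"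
    using sum_matvec_le[of n "\<lambda>k. \<bar>fl n k - 1\<bar>"] \<open>0 \<le> K\<close> by (simp add: mult_left_mono)
  finally show ?thesis
    unfolding dev_from_one_def by (simp add: divide_right_mono add_divide_distrib[symmetric] algebra_simps)
qed

lemma absorb_leaf_parent:
  "absorb_leaf s p l \<phi> p = (\<lambda>n j. \<phi> p n j * matvec n (s n) (\<phi> l n) j)"
  by (simp add: absorb_leaf_def fun_eq_iff)

lemma absorb_leaf_other: "u \<noteq> p \<Longrightarrow> absorb_leaf s p l \<phi> u = \<phi> u"
  by (simp add: absorb_leaf_def fun_eq_iff)

lemma dev_from_one_absorb_tendsto_0:
  assumes "weights_bounded K \<phi>" "dev_from_one (\<phi> p) \<longlonglongrightarrow> 0" "dev_from_one (\<phi> l) \<longlonglongrightarrow> 0"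
  shows "dev_from_one (absorb_leaf s p l \<phi> p) \<longlonglongrightarrow> 0"
proof (rule Lim_null_comparison)
  let ?g = "\<lambda>n. K * C * dev_from_one (\<phi> l) n + K * dev_from_one (\<lambda>n i. \<Sum>j=1..n. s n i j) n
    + dev_from_one (\<phi> p) n"
  show "?g \<longlonglongrightarrow> 0"
    using tendsto_add[OF tendsto_add[OF tendsto_mult_right_zero tendsto_mult_right_zero]]
      assms(2,3) row_sums_dev_tendsto_0 by fastforce
  have "\<bar>\<phi> p n j\<bar> \<le> K" if "j \<in> {1..n}" for n j
    using assms(1) that unfolding weights_bounded_def by fastforce
  then have "dev_from_one (absorb_leaf s p l \<phi> p) n \<le> ?g n" for n
    unfolding absorb_leaf_parent by (rule dev_from_one_absorb_le[OF weights_bounded_nonneg[OF assms(1)]])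
  then show "\<forall>\<^sub>F n in sequentially. norm (dev_from_one (absorb_leaf s p l \<phi> p) n) \<le> ?g n"
    using dev_from_one_nonneg by simp
qed

lemma hom_sum_tendsto:
  assumes "leaf_tree V E" "weights_bounded K \<phi>" "\<And>u. u \<in> V \<Longrightarrow> dev_from_one (\<phi> u) \<longlonglongrightarrow> 0"
  shows "(\<lambda>n. (1 / real n) * hom_sum n (s n) V E (\<lambda>_. 1) (\<lambda>u. \<phi> u n)) \<longlonglongrightarrow> 1"
  using assms
proof (induction arbitrary: \<phi> K rule: leaf_tree.induct)
  case (singleton r)
  have bound: "norm ((1 / real n) * hom_sum n (s n) {r} {} (\<lambda>_. 1) (\<lambda>u. \<phi> u n) - 1) \<le> dev_from_one (\<phi> r) n"
    if "n \<ge> 1" for n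
  proof -
    have "(1 / real n) * hom_sum n (s n) {r} {} (\<lambda>_. 1) (\<lambda>u. \<phi> u n) - 1 = (1 / real n) * (\<Sum>k=1..n. \<phi> r n k - 1)"
      using that by (simp add: hom_sum_singleton sum_subtractf right_diff_distrib)
    then show ?thesis
      unfolding dev_from_one_def by (simp add: abs_mult order.trans[OF sum_abs] divide_right_mono)
  qed
  have "(\<lambda>n. (1 / real n) * hom_sum n (s n) {r} {} (\<lambda>_. 1) (\<lambda>u. \<phi> u n) - 1) \<longlonglongrightarrow> 0"
  proof (rule Lim_null_comparison)
    show "\<forall>\<^sub>F n in sequentially.
        norm ((1 / real n) * hom_sum n (s n) {r} {} (\<lambda>_. 1) (\<lambda>u. \<phi> u n) - 1) \<le> dev_from_one (\<phi> r) n"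
      using eventually_ge_at_top[of 1] by eventually_elim (rule bound)
  qed (use singleton.prems(2) in simp)
  then show ?case by (rule LIM_zero_cancel)
next
  case (add_leaf V E p l)
  have "dev_from_one (absorb_leaf s p l \<phi> u) \<longlonglongrightarrow> 0" if "u \<in> V" for u
  proof (cases "u = p")
    case True
    then show ?thesis
      using dev_from_one_absorb_tendsto_0[OF add_leaf.prems(1)] add_leaf.prems(2) add_leaf.hyps(2) by simp
  next
    case False
    then show ?thesis using add_leaf.prems(2) that by (simp add: absorb_leaf_other)
  qed
  then have "(\<lambda>n. (1 / real n) * hom_sum n (s n) V E (\<lambda>_. 1) (\<lambda>u. absorb_leaf s p l \<phi> u n)) \<longlonglongrightarrow> 1"
    using add_leaf.IH weights_bounded_absorb_leaf[OF add_leaf.prems(1)] by blast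
  then show ?case
    using hom_sum_absorb_leaf[OF add_leaf.hyps, of "\<lambda>_. 1" "\<lambda>_. 1"] by simp
qed

lemma hom_sum_leaf_collision_bound:
  assumes T: "leaf_tree V E" and "p \<in> V" "l \<notin> V" "u \<in> V" and \<phi>: "weights_bounded K \<phi>"
  shows "\<exists>B. \<forall>n. hom_sum n (s n) (insert l V) (insert {p, l} E) (\<lambda>F. if F u = F l then 1 else 0) (\<lambda>v. \<phi> v n)
    \<le> B * \<epsilon> n * real n"
proof -
  obtain B where B: "hom_sum n (s n) V E (\<lambda>_. 1) (\<lambda>v. \<phi> v n) \<le> B * real n" for n
    using hom_sum_linear_bound[OF T \<phi>] by blast
  have "0 \<le> K" using weights_bounded_nonneg[OF \<phi>] .
  have "hom_sum n (s n) (insert l V) (insert {p, l} E) (\<lambda>F. if F u = F l then 1 else 0) (\<lambda>v. \<phi> v n)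
    \<le> (K * B) * \<epsilon> n * real n" for n
  proof -
    have G: "graph V E" using leaf_tree_graph[OF T] .
    have "hom_sum n (s n) (insert l V) (insert {p, l} E) (\<lambda>F. if F u = F l then 1 else 0) (\<lambda>v. \<phi> v n)
        = hom_sum n (s n) V E (\<lambda>g. s n (g p) (g u) * \<phi> l n (g u)) (\<lambda>v. \<phi> v n)"
      using s_sym by (intro hom_sum_leaf_collision[OF G \<open>p \<in> V\<close> \<open>l \<notin> V\<close> \<open>u \<in> V\<close>]) blast
    also have "\<dots> \<le> (\<epsilon> n * K) * hom_sum n (s n) V E (\<lambda>_. 1) (\<lambda>v. \<phi> v n)"
    proof (rule hom_sum_le_scaled[OF G s_nonneg])
      fix g assume "g \<in> V \<rightarrow>\<^sub>E {1..n}"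
      then have "g u \<in> {1..n}" "g p \<in> {1..n}" using \<open>u \<in> V\<close> \<open>p \<in> V\<close> by auto
      then show "s n (g p) (g u) * \<phi> l n (g u) \<le> \<epsilon> n * K"
        using s_le_eps s_nonneg \<phi> eps_nonneg by (intro mult_mono) (auto simp: weights_bounded_def)
    qed (use \<phi> in \<open>auto simp: weights_bounded_def\<close>)
    also have "\<dots> \<le> (\<epsilon> n * K) * (B * real n)"
      using B \<open>0 \<le> K\<close> eps_nonneg by (intro mult_left_mono) auto
    finally show ?thesis by (simp add: mult_ac)
  qed
  then show ?thesis by blast
qed

lemma hom_sum_collision_bound:
  assumes "leaf_tree V E" "weights_bounded K \<phi>" "u \<in> V" "v \<in> V" "u \<noteq> v"
  shows "\<exists>B. \<forall>n. hom_sum n (s n) V E (\<lambda>F. if F u = F v then 1 else 0) (\<lambda>w. \<phi> w n) \<le> B * \<epsilon> n * real n"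
  using assms
proof (induction arbitrary: \<phi> K u v rule: leaf_tree.induct)
  case (add_leaf V E p l)
  consider "v = l" | "u = l" | "u \<noteq> l" "v \<noteq> l" by blast
  then show ?case
  proof cases
    case 1
    then have "u \<in> V" using add_leaf.prems by auto
    then show ?thesis
      unfolding 1 by (rule hom_sum_leaf_collision_bound[OF add_leaf.hyps _ add_leaf.prems(1)])
  next
    case 2
    then have "v \<in> V" using add_leaf.prems by auto
    have swap: "(\<lambda>F. if F u = F v then 1 else 0) = (\<lambda>F. if F v = F l then (1::real) else 0)"
      using 2 by (auto simp: fun_eq_iff)
    show ?thesis
      unfolding swap by (rule hom_sum_leaf_collision_bound[OF add_leaf.hyps \<open>v \<in> V\<close> add_leaf.prems(1)])
  next
    case 3
    then have "hom_sum n (s n) (insert l V) (insert {p, l} E) (\<lambda>F. if F u = F v then 1 else 0) (\<lambda>w. \<phi> w n)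
      = hom_sum n (s n) V E (\<lambda>F. if F u = F v then 1 else 0) (\<lambda>w. absorb_leaf s p l \<phi> w n)" for n
      by (intro hom_sum_absorb_leaf add_leaf.hyps) simp
    moreover have "\<exists>B. \<forall>n. hom_sum n (s n) V E (\<lambda>F. if F u = F v then 1 else 0) (\<lambda>w. absorb_leaf s p l \<phi> w n)
        \<le> B * \<epsilon> n * real n"
      using add_leaf.IH weights_bounded_absorb_leaf[OF add_leaf.prems(1)] add_leaf.prems 3 by blast
    ultimately show ?thesis by simp
  qed
qed simp

lemma all_maps_sum_tendsto_1:
  assumes "leaf_tree V E"
  shows "(\<lambda>n. (1 / real n) * (\<Sum>F\<in>V \<rightarrow>\<^sub>E {1..n}. Pw E (s n) F)) \<longlonglongrightarrow> 1"
proof -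
  have "weights_bounded 1 (\<lambda>_ _ _. 1)" by (simp add: weights_bounded_def)
  moreover have "dev_from_one (\<lambda>_ _. 1) = (\<lambda>_. 0)" by (simp add: dev_from_one_def fun_eq_iff)
  then have "dev_from_one ((\<lambda>_ _ _. 1) u) \<longlonglongrightarrow> 0" for u :: 'v by simp
  ultimately have "(\<lambda>n. (1 / real n) * hom_sum n (s n) V E (\<lambda>_. 1) (\<lambda>_ _. 1)) \<longlonglongrightarrow> 1"
    by (rule hom_sum_tendsto[OF assms])
  then show ?thesis by (simp add: hom_sum_def)
qed

lemma collision_sum_tendsto_0:
  assumes T: "leaf_tree V E" and "u \<in> V" "v \<in> V" "u \<noteq> v"
  shows "(\<lambda>n. (1 / real n) * (\<Sum>F\<in>V \<rightarrow>\<^sub>E {1..n}. (if F u = F v then 1 else 0) * Pw E (s n) F)) \<longlonglongrightarrow> 0"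
proof -
  let ?c = "\<lambda>n. \<Sum>F\<in>V \<rightarrow>\<^sub>E {1..n}. (if F u = F v then 1 else 0) * Pw E (s n) F"
  have "weights_bounded 1 (\<lambda>_ _ _. 1)" by (simp add: weights_bounded_def)
  then obtain B where "hom_sum n (s n) V E (\<lambda>F. if F u = F v then 1 else 0) (\<lambda>_ _. 1) \<le> B * \<epsilon> n * real n"
    for n
    using hom_sum_collision_bound[OF T _ assms(2-4)] by blast
  then have B: "?c n \<le> B * \<epsilon> n * real n" for n by (simp add: hom_sum_def)
  have "0 \<le> ?c n" for n
    using Pw_nonneg[OF leaf_tree_graph[OF T]] s_nonneg by (intro sum_nonneg) simp
  then have bound: "norm ((1 / real n) * ?c n) \<le> B * \<epsilon> n" if "n \<ge> 1" for n
    using B[of n] that by (simp add: field_simps)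
  have "\<forall>\<^sub>F n in sequentially. norm ((1 / real n) * ?c n) \<le> B * \<epsilon> n"
    using eventually_ge_at_top[of 1] by eventually_elim (rule bound)
  moreover have "(\<lambda>n. B * \<epsilon> n) \<longlonglongrightarrow> 0" using tendsto_mult_right_zero[OF eps_tendsto_0] .
  ultimately show ?thesis by (rule Lim_null_comparison)
qed

theorem injective_hom_sum_tendsto_1:
  assumes T: "leaf_tree V E"
  shows "(\<lambda>n. (1 / real n) * (\<Sum>F\<in>injs V n. Pw E (s n) F)) \<longlonglongrightarrow> 1"
proof -
  let ?D = "{(u, v) \<in> V \<times> V. u \<noteq> v}"
  let ?all = "\<lambda>n. \<Sum>F\<in>V \<rightarrow>\<^sub>E {1..n}. Pw E (s n) F"
  let ?c = "\<lambda>n d. \<Sum>F\<in>V \<rightarrow>\<^sub>E {1..n}. (if F (fst d) = F (snd d) then 1 else 0) * Pw E (s n) F"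
  have "finite V" using leaf_tree_graph[OF T] by (simp add: graph_def)
  have Pw_s_nonneg: "0 \<le> Pw E (s n) F" if "F \<in> V \<rightarrow>\<^sub>E {1..n}" for n F
    by (rule Pw_nonneg[OF leaf_tree_graph[OF T] that]) (rule s_nonneg)
  have "(\<lambda>n. \<Sum>d\<in>?D. (1 / real n) * ?c n d) \<longlonglongrightarrow> 0"
  proof (rule tendsto_null_sum)
    fix d assume "d \<in> ?D"
    then show "(\<lambda>n. (1 / real n) * ?c n d) \<longlonglongrightarrow> 0" by (intro collision_sum_tendsto_0[OF T]) auto
  qed
  from tendsto_diff[OF all_maps_sum_tendsto_1[OF T] this]
  have lower: "(\<lambda>n. (1 / real n) * (?all n - (\<Sum>d\<in>?D. ?c n d))) \<longlonglongrightarrow> 1"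
    by (simp add: right_diff_distrib sum_distrib_left)
  have "(1 / real n) * (?all n - (\<Sum>d\<in>?D. ?c n d)) \<le> (1 / real n) * (\<Sum>F\<in>injs V n. Pw E (s n) F)"
    "(1 / real n) * (\<Sum>F\<in>injs V n. Pw E (s n) F) \<le> (1 / real n) * ?all n" for n
    using sum_injs_ge[where f = "Pw E (s n)" and n = n, OF \<open>finite V\<close> Pw_s_nonneg]
      sum_injs_le[where f = "Pw E (s n)" and n = n, OF \<open>finite V\<close> Pw_s_nonneg]
    by (simp_all add: divide_right_mono)
  then show ?thesis
    by (intro tendsto_sandwich[OF _ _ lower all_maps_sum_tendsto_1[OF T]] always_eventually allI)
qed

end

lemma variance_profile_cvar:
  fixes w :: "nat \<Rightarrow> nat \<Rightarrow> nat \<Rightarrow> 'a \<Rightarrow> complex"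
  assumes prob: "\<And>n. prob_space (M n)"
    and herm: "\<And>n i j x. i \<in> {1..n} \<Longrightarrow> j \<in> {1..n} \<Longrightarrow> x \<in> space (M n) \<Longrightarrow>
      w n j i x = cnj (w n i j x)"
    and mean0: "\<And>n i j. i \<in> {1..n} \<Longrightarrow> j \<in> {1..n} \<Longrightarrow> (\<integral>x. w n i j x \<partial>M n) = 0"
    and bound: "\<And>n i j x. i \<in> {1..n} \<Longrightarrow> j \<in> {1..n} \<Longrightarrow> x \<in> space (M n) \<Longrightarrow>
      cmod (w n i j x) \<le> \<eta> n"
    and eta_lim: "\<eta> \<longlonglongrightarrow> 0"
    and rowsum: "\<And>n i. i \<in> {1..n} \<Longrightarrow> (\<Sum>j=1..n. cvar (M n) (w n i j)) \<le> C"
    and profile: "(\<lambda>n. (1 / real n) * (\<Sum>i=1..n. \<bar>\<Sum>j=1..n. cvar (M n) (w n i j) - 1 / real n\<bar>))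
      \<longlonglongrightarrow> 0"
  shows "variance_profile (\<lambda>n i j. cvar (M n) (w n i j)) C (\<lambda>n. (\<eta> n)\<^sup>2)"
proof -
  define s where "s = (\<lambda>n i j. cvar (M n) (w n i j))"
  have "(\<Sum>j=1..n. cvar (M n) (w n i j) - 1 / real n) = (\<Sum>j=1..n. s n i j) - 1" if "i \<in> {1..n}" for n i
    using that by (simp add: sum_subtractf s_def)
  then have "(\<Sum>i=1..n. \<bar>(\<Sum>j=1..n. s n i j) - 1\<bar>) = (\<Sum>i=1..n. \<bar>\<Sum>j=1..n. cvar (M n) (w n i j) - 1 / real n\<bar>)"
    for n by (intro sum.cong) simp_all
  then have "dev_from_one (\<lambda>n i. \<Sum>j=1..n. s n i j) \<longlonglongrightarrow> 0"
    using profile unfolding dev_from_one_def by presburger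
  moreover have "s n j i = s n i j" if "i \<in> {1..n}" "j \<in> {1..n}" for n i j
    using cvar_cong[of "M n" "w n j i" "\<lambda>x. cnj (w n i j x)"] herm[OF that] cvar_cnj
    by (simp add: s_def)
  moreover have "s n i j \<le> (\<eta> n)\<^sup>2" if "i \<in> {1..n}" "j \<in> {1..n}" for n i j
    unfolding s_def using prob mean0[OF that] bound[OF that] by (rule cvar_le_of_mean_zero)
  moreover have "(\<lambda>n. (\<eta> n)\<^sup>2) \<longlonglongrightarrow> 0" using tendsto_power[OF eta_lim, of 2] by simp
  ultimately show ?thesis
    using rowsum by unfold_locales (auto simp: s_def cvar_nonneg)
qed

theorem lemma3p2:
  fixes M :: "nat \<Rightarrow> 'a measure"
    and w :: "nat \<Rightarrow> nat \<Rightarrow> nat \<Rightarrow> 'a \<Rightarrow> complex"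
    and \<eta> :: "nat \<Rightarrow> real"
    and C :: real
    and V :: "'v set" and E :: "'v set set"
  assumes prob: "\<And>n. prob_space (M n)"
    and meas: "\<And>n i j. i \<in> {1..n} \<Longrightarrow> j \<in> {1..n} \<Longrightarrow> w n i j \<in> borel_measurable (M n)"
    and herm: "\<And>n i j x. i \<in> {1..n} \<Longrightarrow> j \<in> {1..n} \<Longrightarrow> x \<in> space (M n) \<Longrightarrow>
                  w n j i x = cnj (w n i j x)"
    and indep: "\<And>n. prob_space.indep_vars (M n) (\<lambda>_. borel) (\<lambda>(i, j). w n i j)
                  {(i, j). 1 \<le> i \<and> i \<le> j \<and> j \<le> n}"
    and mean0: "\<And>n i j. i \<in> {1..n} \<Longrightarrow> j \<in> {1..n} \<Longrightarrow> (\<integral>x. w n i j x \<partial>M n) = 0"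
    and eta_pos: "\<And>n. \<eta> n > 0"
    and eta_lim: "\<eta> \<longlonglongrightarrow> 0"
    and bound: "\<And>n i j x. i \<in> {1..n} \<Longrightarrow> j \<in> {1..n} \<Longrightarrow> x \<in> space (M n) \<Longrightarrow>
                  cmod (w n i j x) \<le> \<eta> n"
    and C_nonneg: "C \<ge> 0"
    and rowsum: "\<And>n i. i \<in> {1..n} \<Longrightarrow> (\<Sum>j=1..n. cvar (M n) (w n i j)) \<le> C"
    and profile: "(\<lambda>n. (1 / real n) * (\<Sum>i=1..n. \<bar>\<Sum>j=1..n. cvar (M n) (w n i j) - 1 / real n\<bar>))
                    \<longlonglongrightarrow> 0"
    and tree: "is_tree V E"
  shows "(\<lambda>n. (1 / real n) * (\<Sum>F\<in>injs V n. Pw E (\<lambda>i j. cvar (M n) (w n i j)) F)) \<longlonglongrightarrow> 1"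
proof -
  interpret variance_profile "\<lambda>n i j. cvar (M n) (w n i j)" C "\<lambda>n. (\<eta> n)\<^sup>2"
    using prob herm mean0 bound eta_lim rowsum profile by (rule variance_profile_cvar)
  show ?thesis
    using injective_hom_sum_tendsto_1[OF is_tree_imp_leaf_tree[OF tree]] .
qed

end
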